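(* For real $u\ge3$, $$P_3(u)=\tfrac12\mathrm{Li}_3\!\left(\frac{1}{u(2-u)}\right)-\mathrm{Li}_3\!\left(\frac1u\right)-\mathrm{Li}_3\!\left(\frac{1}{2-u}\right)+\mathrm{Li}_2\!\left(\frac1u\right)\log(u-2)+\tfrac13\zeta_3-\tfrac12\zeta_2\log(u)+\tfrac1{12}\log^3\!\big(u(u-2)\big)-\tfrac12\log^2(u-2)\log(u).$$
   Context: The functions $P_k$ are defined by $P_0(u)=1$ for $u\ge 0$, and for integers $k\ge1$, $P_k:[k,\infty)\to\mathbb{R}$ is the function with $P_k(k)=0$ and $uP_k'(u)=P_{k-1}(u-1)$ for $u\ge k$. Here $\mathrm{Li}_k(z)=\sum_{n\ge1}z^n/n^k$ for $|z|\le1$ and $\zeta_k=\mathrm{Li}_k(1)$. *)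

theory Defs
  imports "HOL-Analysis.Analysis"
begin

text \<open>Real polylogarithm Li_k(z) = sum_{n>=1} z^n / n^k, intended for |z| <= 1.\<close>
definition polylog :: "nat \<Rightarrow> real \<Rightarrow> real" where
  "polylog k z = (\<Sum>n. z ^ (Suc n) / (real (Suc n)) ^ k)"

definition zeta_val :: "nat \<Rightarrow> real" where
  "zeta_val k = polylog k 1"

end

theory Submission
  imports Defs "HOL-Real_Asymp.Real_Asymp"
begin

text \<open>
  Integrating \<open>u P\<^sub>k'(u) = P\<^sub>k\<^sub>-\<^sub>1(u - 1)\<close> gives \<open>P\<^sub>1 = ln\<close> and
  \<open>P\<^sub>2(u) = ln\<^sup>2 u / 2 + Li\<^sub>2(1/u) - \<zeta>\<^sub>2/2\<close>. For the claimed closed form \<open>F\<close> of \<open>P\<^sub>3\<close>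
  one checks \<open>u F'(u) = P\<^sub>2(u - 1)\<close>: differentiation produces \<open>Li\<^sub>2\<close> at \<open>1/u\<close>, \<open>1/(2 - u)\<close>
  and \<open>1/(u(2 - u))\<close>, which Landen's identity and the duplication formula reduce to
  \<open>Li\<^sub>2(\<plusminus>1/(u - 1))\<close>. It remains to see \<open>F(3) = 0\<close>, i.e. the evaluation
  \<open>Li\<^sub>3(-1/3) - 2 Li\<^sub>3(1/3) = -ln\<^sup>3 3/6 + \<zeta>\<^sub>2 ln 3 - 13 \<zeta>\<^sub>3/6\<close>, obtained from Landen's
  trilogarithm identity at \<open>1/2, 1/3, 1/4\<close>, duplication at \<open>1/2\<close> and a relation between
  \<open>Li\<^sub>3(\<plusminus>(1 - y)/(1 + y))\<close> and \<open>Li\<^sub>3(1 - y), Li\<^sub>3(1/(1 + y)), Li\<^sub>3(1 - y\<^sup>2)\<close> at \<open>y = 1/2\<close>.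
  Every functional equation is proved by showing that the derivative of the difference of its
  two sides vanishes and evaluating at one point, or taking a one-sided limit at \<open>0\<close>.
\<close>

lemma polylog_0 [simp]: "polylog k 0 = 0"
  by (simp add: polylog_def)

lemma summable_polylog:
  fixes z :: real
  assumes "\<bar>z\<bar> < 1"
  shows "summable (\<lambda>n. z ^ Suc n / real (Suc n) ^ k)"
proof (rule summable_comparison_test)
  show "summable (\<lambda>n. \<bar>z\<bar> * \<bar>z\<bar> ^ n)"
    using assms by (intro summable_mult summable_geometric) auto
  have "\<bar>z\<bar> ^ Suc n / real (Suc n) ^ k \<le> \<bar>z\<bar> ^ Suc n" for n
    using divide_left_mono[of 1 "real (Suc n) ^ k" "\<bar>z\<bar> ^ Suc n"] by (simp add: one_le_power)
  then show "\<exists>N. \<forall>n\<ge>N. norm (z ^ Suc n / real (Suc n) ^ k) \<le> \<bar>z\<bar> * \<bar>z\<bar> ^ n"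
    by (simp add: abs_divide abs_mult power_abs)
qed

lemma continuous_on_polylog:
  assumes "k \<ge> 2"
  shows "continuous_on {-1..1} (polylog k)"
proof -
  have "summable (\<lambda>n. inverse (real n ^ 2))"
    by (rule inverse_power_summable) auto
  then have summable: "summable (\<lambda>n. 1 / real (Suc n) ^ 2)"
    by (subst (asm) summable_Suc_iff[symmetric]) (simp add: divide_inverse)
  have bound: "norm (z ^ Suc n / real (Suc n) ^ k) \<le> 1 / real (Suc n) ^ 2"
    if "z \<in> {-1..1}" for z :: real and n
  proof -
    have "real (Suc n) ^ 2 \<le> real (Suc n) ^ k"
      using assms by (intro power_increasing) auto
    moreover have "\<bar>z\<bar> ^ Suc n \<le> 1"
      using that by (intro power_le_one) auto
    ultimately show ?thesis
      unfolding real_norm_def abs_divide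
      by (intro frac_le) (auto simp: power_abs abs_mult simp del: of_nat_Suc)
  qed
  have "uniform_limit {-1..1} (\<lambda>n z. \<Sum>i<n. z ^ Suc i / real (Suc i) ^ k)
      (\<lambda>z. \<Sum>i. z ^ Suc i / real (Suc i) ^ k) sequentially"
    using bound summable by (rule Weierstrass_m_test)
  then have "continuous_on {-1..1} (\<lambda>z. \<Sum>i. z ^ Suc i / real (Suc i) ^ k)"
    by (rule uniform_limit_theorem[rotated])
      (auto intro!: always_eventually continuous_on_sum continuous_on_divide continuous_intros
        simp del: of_nat_Suc)
  then show ?thesis
    unfolding polylog_def[abs_def] .
qed

lemma continuous_on_polylog_compose:
  assumes "k \<ge> 2" "continuous_on S f" "\<And>x. x \<in> S \<Longrightarrow> f x \<in> {-1..1}"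
  shows "continuous_on S (\<lambda>x. polylog k (f x))"
  using continuous_on_compose2[OF continuous_on_polylog[OF assms(1)] assms(2)] assms(3) by blast

lemma tendsto_polylog_compose_at_right:
  assumes "k \<ge> 2" "a < b" "continuous_on {a..b} f" "\<And>x. x \<in> {a..b} \<Longrightarrow> f x \<in> {-1..1}"
  shows "((\<lambda>x. polylog k (f x)) \<longlongrightarrow> polylog k (f a)) (at_right a)"
proof -
  have "continuous_on {a..b} (\<lambda>x. polylog k (f x))"
    by (rule continuous_on_polylog_compose[OF assms(1,3,4)])
  then have "((\<lambda>x. polylog k (f x)) \<longlongrightarrow> polylog k (f a)) (at a within {a..b})"
    using assms(2) by (auto simp: continuous_on_def)
  then show ?thesis
    by (simp add: at_within_Icc_at_right[OF assms(2)])
qed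

lemma has_real_derivative_polylog:
  fixes z :: real
  assumes "\<bar>z\<bar> < 1" "z \<noteq> 0"
  shows "(polylog (Suc k) has_real_derivative polylog k z / z) (at z)"
proof -
  define c where "c n = (if n = 0 then 0 else 1 / real n ^ Suc k)" for n
  have summable_c: "summable (\<lambda>n. c n * x ^ n)" if "\<bar>x\<bar> < 1" for x :: real
    using summable_polylog[OF that, of "Suc k"]
    by (subst summable_Suc_iff[symmetric]) (simp add: c_def)
  have power_series: "polylog (Suc k) x = (\<Sum>n. c n * x ^ n)" if "\<bar>x\<bar> < 1" for x :: real
    using suminf_split_head[OF summable_c[OF that]] by (simp add: c_def polylog_def)
  obtain K where K: "\<bar>z\<bar> < K" "K < 1"
    using assms(1) dense by blast
  then have "((\<lambda>x. \<Sum>n. c n * x ^ n) has_real_derivative (\<Sum>n. diffs c n * z ^ n)) (at z)"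
    by (intro termdiffs_strong[OF summable_c[of K]]) auto
  moreover have "(\<Sum>n. diffs c n * z ^ n) = polylog k z / z"
  proof -
    have "(\<Sum>n. diffs c n * z ^ n) = (\<Sum>n. z ^ Suc n / real (Suc n) ^ k / z)"
      using assms(2) by (intro suminf_cong) (simp add: diffs_def c_def field_simps del: of_nat_Suc)
    also have "\<dots> = polylog k z / z"
      unfolding polylog_def by (rule suminf_divide[OF summable_polylog[OF assms(1)]])
    finally show ?thesis .
  qed
  moreover have "eventually (\<lambda>x. x \<in> {-1<..<1}) (nhds z)"
    using assms(1) by (intro eventually_nhds_in_open) auto
  then have "eventually (\<lambda>x. polylog (Suc k) x = (\<Sum>n. c n * x ^ n)) (nhds z)"
    by eventually_elim (simp add: power_series abs_less_iff)
  ultimately show ?thesis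
    by (simp add: DERIV_cong_ev)
qed

lemma polylog_1:
  fixes z :: real
  assumes "\<bar>z\<bar> < 1"
  shows "polylog 1 z = - ln (1 - z)"
proof -
  have "ln (1 - z) = (\<Sum>n. (-1) ^ n * (1 / real (n + 1)) * ((1 - z) - 1) ^ Suc n)"
    using assms by (intro ln_series) auto
  also have "\<dots> = (\<Sum>n. - (z ^ Suc n / real (Suc n)))"
    by (simp add: power_minus' field_simps)
  also have "\<dots> = - polylog 1 z"
    using suminf_minus[OF summable_polylog[OF assms, of 1]] by (simp add: polylog_def)
  finally show ?thesis
    by simp
qed

lemma DERIV_polylog_compose:
  assumes "(f has_real_derivative f') (at x within S)" "\<bar>f x\<bar> < 1" "f x \<noteq> 0"
  shows "((\<lambda>x. polylog (Suc k) (f x)) has_real_derivative polylog k (f x) / f x * f') (at x within S)"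
  using DERIV_chain2[OF has_real_derivative_polylog[OF assms(2,3)] assms(1)] .

lemma DERIV_polylog2_compose [derivative_intros]:
  assumes "(f has_real_derivative f') (at x within S)" "\<bar>f x\<bar> < 1" "f x \<noteq> 0"
  shows "((\<lambda>x. polylog 2 (f x)) has_real_derivative - ln (1 - f x) / f x * f') (at x within S)"
  using DERIV_polylog_compose[OF assms, of 1, unfolded Suc_1 polylog_1[OF assms(2)]] by simp

lemma DERIV_polylog3_compose [derivative_intros]:
  assumes "(f has_real_derivative f') (at x within S)" "\<bar>f x\<bar> < 1" "f x \<noteq> 0"
  shows "((\<lambda>x. polylog 3 (f x)) has_real_derivative polylog 2 (f x) / f x * f') (at x within S)"
  using DERIV_polylog_compose[OF assms, of 2] by simp

lemma DERIV_zero_except_finite_imp_const: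
  fixes f :: "real \<Rightarrow> real"
  assumes "finite K" "continuous_on {a..b} f"
    and "\<And>t. a < t \<Longrightarrow> t < b \<Longrightarrow> t \<notin> K \<Longrightarrow> (f has_real_derivative 0) (at t)"
    and "c \<in> {a..b}" "x \<in> {a..b}"
  shows "f x = f c"
proof -
  have derivative_zero: "(f has_derivative (\<lambda>h. 0)) (at t within {a..b})"
    if "t \<in> {a..b} - (K \<union> {a, b})" for t
  proof -
    from that have "a < t" "t < b" "t \<notin> K"
      by auto
    then have "(f has_real_derivative 0) (at t)"
      by (rule assms(3))
    then show ?thesis
      by (simp add: has_field_derivative_def lambda_zero has_derivative_at_withinI)
  qed
  have "finite (K \<union> {a, b})"
    using assms(1) by simp
  from has_derivative_zero_unique_strong_convex
    [OF convex_real_interval(5) this assms(2,4) refl derivative_zero assms(5)]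
  show ?thesis .
qed

lemma DERIV_zero_imp_const_interval:
  fixes f :: "real \<Rightarrow> real"
  assumes "continuous_on {a..b} f" "\<And>t. a < t \<Longrightarrow> t < b \<Longrightarrow> (f has_real_derivative 0) (at t)"
    and "c \<in> {a..b}" "x \<in> {a..b}"
  shows "f x = f c"
  using assms by (intro DERIV_zero_except_finite_imp_const[of "{}"]) auto

lemma DERIV_zero_imp_eq_limit_at_right:
  fixes f :: "real \<Rightarrow> real"
  assumes "a < b" "continuous_on {a<..b} f"
    and "\<And>t. a < t \<Longrightarrow> t < b \<Longrightarrow> (f has_real_derivative 0) (at t)"
    and "(f \<longlongrightarrow> L) (at_right a)" "x \<in> {a<..b}"
  shows "f x = L"
proof -
  have const: "f y = f b" if "a < y" "y \<le> b" for y
  proof (rule DERIV_zero_imp_const_interval[of y b f])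
    show "continuous_on {y..b} f"
      using that by (intro continuous_on_subset[OF assms(2)]) auto
    show "(f has_real_derivative 0) (at t)" if "y < t" "t < b" for t
      using that \<open>a < y\<close> by (intro assms(3)) auto
  qed (use that in auto)
  have "eventually (\<lambda>y. f y = f b) (at_right a)"
    using eventually_at_right_real[OF assms(1)] by eventually_elim (rule const; simp)
  then have "(f \<longlongrightarrow> f b) (at_right a)"
    by (rule tendsto_eventually)
  then have "L = f b"
    using tendsto_unique[OF _ assms(4)] by (simp add: trivial_limit_at_right_real)
  moreover have "f x = f b"
    using assms(5) by (intro const) auto
  ultimately show ?thesis
    by simp
qed

lemma polylog2_reflection:
  fixes x :: real
  assumes "0 < x" "x < 1"
  shows "polylog 2 x + polylog 2 (1 - x) = zeta_val 2 - ln x * ln (1 - x)"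
proof -
  define g where "g x = polylog 2 x + polylog 2 (1 - x) + ln x * ln (1 - x)" for x :: real
  have "((\<lambda>x::real. ln x * ln (1 - x)) \<longlongrightarrow> 0) (at_right 0)"
    by real_asymp
  then have "(g \<longlongrightarrow> polylog 2 0 + polylog 2 (1 - 0) + 0) (at_right 0)"
    unfolding g_def[abs_def]
    by (intro tendsto_add tendsto_polylog_compose_at_right[where b = "1/2"])
      (auto intro!: continuous_intros)
  then have lim: "(g \<longlongrightarrow> zeta_val 2) (at_right 0)"
    by (simp add: zeta_val_def)
  have g_const: "g x = zeta_val 2" if "0 < x" "x \<le> 1/2" for x
  proof (rule DERIV_zero_imp_eq_limit_at_right[of 0 "1/2" g, OF _ _ _ lim])
    show "continuous_on {0<..1/2} g"
      unfolding g_def by (intro continuous_intros continuous_on_polylog_compose) auto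
    show "(g has_real_derivative 0) (at t)" if "0 < t" "t < 1/2" for t
      unfolding g_def
      apply (rule derivative_eq_intros refl | use that in simp)+
      done
  qed (use that in auto)
  show ?thesis
  proof (cases "x \<le> 1/2")
    case True
    then show ?thesis
      using g_const[OF assms(1)] by (simp add: g_def)
  next
    case False
    then show ?thesis
      using g_const[of "1 - x"] assms by (simp add: g_def mult.commute)
  qed
qed

lemma Landen_map_bounds:
  fixes z :: real
  assumes "-1 \<le> z" "z \<le> 1/2"
  shows "z / (z - 1) \<in> {-1..1}"
  using assms by (auto simp: divide_le_eq le_divide_eq)

lemma Landen_map_strict_bound:
  fixes z :: real
  assumes "-1 < z" "z < 1/2"
  shows "\<bar>z / (z - 1)\<bar> < 1"
  using assms by (auto simp: abs_less_iff divide_less_eq less_divide_eq)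

lemma polylog2_Landen:
  fixes z :: real
  assumes "-1 \<le> z" "z \<le> 1/2"
  shows "polylog 2 z + polylog 2 (z / (z - 1)) = - (ln (1 - z) ^ 2) / 2"
proof -
  define g where "g z = polylog 2 z + polylog 2 (z / (z - 1)) + ln (1 - z) ^ 2 / 2" for z :: real
  \<comment> \<open>\<open>0\<close> is excluded: the derivative of \<open>Li\<^sub>2\<close> is only available as \<open>-ln(1 - z)/z\<close>\<close>
  have "g z = g 0"
  proof (rule DERIV_zero_except_finite_imp_const[of "{0}" "-1" "1/2" g])
    show "continuous_on {-1..1/2} g"
      unfolding g_def
      by (intro continuous_intros continuous_on_polylog_compose Landen_map_bounds) auto
    show "(g has_real_derivative 0) (at t)" if "-1 < t" "t < 1/2" "t \<notin> {0}" for t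
    proof -
      have t: "\<bar>t\<bar> < 1" "t \<noteq> 0" "t - 1 \<noteq> 0" "0 < 1 - t" "t / (t - 1) \<noteq> 0"
        using that by auto
      have ln_eq: "ln (1 - t / (t - 1)) = - ln (1 - t)"
      proof -
        have "1 - t / (t - 1) = 1 / (1 - t)"
          using t by (simp add: field_simps)
        then show ?thesis
          using t by (simp add: ln_div)
      qed
      show ?thesis
        unfolding g_def
        apply (rule derivative_eq_intros refl t Landen_map_strict_bound that numeral_neq_zero)+
        apply (subst ln_eq)
        using t apply (simp add: divide_simps)
        apply (simp add: algebra_simps)
        done
    qed
  qed (use assms in auto)
  then show ?thesis
    by (simp add: g_def)
qed

lemma polylog_square:
  fixes z :: real
  assumes "k \<ge> 1" "0 \<le> z" "z < 1"
  shows "polylog k (z\<^sup>2) = 2 ^ (k - 1) * (polylog k z + polylog k (-z))"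
  using assms
proof (induction k arbitrary: z rule: nat_induct_at_least)
  case base
  have "1 - z\<^sup>2 = (1 - z) * (1 - -z)"
    by (simp add: algebra_simps power2_eq_square)
  then show ?case
    using base polylog_1[of "z\<^sup>2"] polylog_1[of z] polylog_1[of "-z"]
    by (simp add: abs_square_less_1 ln_mult)
next
  case (Suc k)
  define g where "g t = polylog (Suc k) (t\<^sup>2) / 2 ^ k - polylog (Suc k) t - polylog (Suc k) (-t)"
    for t :: real
  have two_power: "(2::real) ^ k = 2 * 2 ^ (k - 1)"
    using Suc.hyps by (simp flip: power_Suc)
  have "g z = g 0"
  proof (rule DERIV_zero_imp_const_interval[of 0 z g])
    show "continuous_on {0..z} g"
      unfolding g_def using Suc.prems Suc.hyps
      by (intro continuous_intros continuous_on_polylog_compose)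
        (auto simp: power_le_one intro: order_trans[OF _ zero_le_power2])
    show "(g has_real_derivative 0) (at t)" if "0 < t" "t < z" for t
    proof -
      have t: "\<bar>t\<bar> < 1" "t \<noteq> 0" "\<bar>-t\<bar> < 1" "-t \<noteq> 0" "\<bar>t\<^sup>2\<bar> < 1" "t\<^sup>2 \<noteq> 0"
        using that Suc.prems by (auto simp: abs_square_less_1)
      have IH: "polylog k (t\<^sup>2) = 2 ^ (k - 1) * (polylog k t + polylog k (-t))"
        using that Suc.prems by (intro Suc.IH) auto
      show ?thesis
        unfolding g_def
        apply (rule derivative_eq_intros DERIV_polylog_compose refl t power_not_zero numeral_neq_zero)+
        using t apply (simp add: IH[unfolded power2_eq_square] two_power field_simps power2_eq_square)
        done
    qed
  qed (use Suc.prems in auto)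
  then show ?case
    by (simp add: g_def field_simps)
qed

lemma polylog_minus_one:
  assumes "k \<ge> 2"
  shows "polylog k (-1) = (1 / 2 ^ (k - 1) - 1) * zeta_val k"
proof -
  define h where "h z = polylog k (z\<^sup>2) - 2 ^ (k - 1) * (polylog k z + polylog k (-z))" for z :: real
  have "continuous_on {0..1} h"
    unfolding h_def using assms
    by (intro continuous_intros continuous_on_polylog_compose)
      (auto simp: power_le_one intro: order_trans[OF _ zero_le_power2])
  then have "(h \<longlongrightarrow> h 1) (at 1 within {0..1})"
    by (auto simp: continuous_on_def)
  then have "(h \<longlongrightarrow> h 1) (at_left 1)"
    by (simp add: at_within_Icc_at_left)
  moreover have "eventually (\<lambda>z. h z = 0) (at_left 1)"
    using eventually_at_left_real[OF zero_less_one]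
    by eventually_elim (use assms in \<open>simp add: h_def polylog_square\<close>)
  then have "(h \<longlongrightarrow> 0) (at_left 1)"
    by (rule tendsto_eventually)
  ultimately have "h 1 = 0"
    using tendsto_unique trivial_limit_at_left_real by blast
  then show ?thesis
    by (simp add: h_def zeta_val_def field_simps)
qed

text \<open>With Legendre's \<open>\<chi>\<^sub>2(x) = (Li\<^sub>2 x - Li\<^sub>2(-x))/2\<close> this is Landen's
  \<open>\<chi>\<^sub>2((1 - y)/(1 + y)) + \<chi>\<^sub>2 y = \<pi>\<^sup>2/8 + ln y ln((1 + y)/(1 - y))/2\<close>.\<close>

lemma polylog2_chi_reflection:
  fixes y :: real
  assumes "0 < y" "y \<le> 1/2"
  shows "polylog 2 ((1 - y) / (1 + y)) - polylog 2 (- ((1 - y) / (1 + y))) + polylog 2 y - polylog 2 (-y)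
    = 3/2 * zeta_val 2 + ln y * (ln (1 + y) - ln (1 - y))"
proof -
  define g where "g y = polylog 2 ((1 - y) / (1 + y)) - polylog 2 (- ((1 - y) / (1 + y)))
    + polylog 2 y - polylog 2 (-y) - ln y * (ln (1 + y) - ln (1 - y))" for y :: real
  have c: "continuous_on {0..1/2} (\<lambda>y::real. (1 - y) / (1 + y))"
    by (intro continuous_intros) auto
  have "((\<lambda>y::real. ln y * (ln (1 + y) - ln (1 - y))) \<longlongrightarrow> 0) (at_right 0)"
    by real_asymp
  then have "(g \<longlongrightarrow> polylog 2 ((1 - 0) / (1 + 0)) - polylog 2 (- ((1 - 0) / (1 + 0)))
      + polylog 2 0 - polylog 2 (-0) - 0) (at_right 0)"
    unfolding g_def[abs_def]
    by (intro tendsto_diff tendsto_add tendsto_polylog_compose_at_right[where b = "1/2"])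
      (auto intro!: c continuous_intros simp: divide_le_eq le_divide_eq)
  then have lim: "(g \<longlongrightarrow> 3/2 * zeta_val 2) (at_right 0)"
    by (simp add: polylog_minus_one zeta_val_def)
  have "g y = 3/2 * zeta_val 2"
  proof (rule DERIV_zero_imp_eq_limit_at_right[of 0 "1/2" g, OF _ _ _ lim])
    show "continuous_on {0<..1/2} g"
      unfolding g_def
      by (intro continuous_intros continuous_on_polylog_compose) (auto simp: divide_le_eq le_divide_eq)
    show "(g has_real_derivative 0) (at t)" if "0 < t" "t < 1/2" for t
    proof -
      have t: "\<bar>(1 - t) / (1 + t)\<bar> < 1" "(1 - t) / (1 + t) \<noteq> 0"
        "\<bar>- ((1 - t) / (1 + t))\<bar> < 1" "- ((1 - t) / (1 + t)) \<noteq> 0"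
        "\<bar>t\<bar> < 1" "t \<noteq> 0" "\<bar>-t\<bar> < 1" "-t \<noteq> 0" "0 < t" "0 < 1 + t" "0 < 1 - t" "1 + t \<noteq> 0"
        using that by (auto simp: divide_less_eq less_divide_eq abs_less_iff)
      have ln1: "ln (1 - (1 - t) / (1 + t)) = ln 2 + ln t - ln (1 + t)"
      proof -
        have "1 - (1 - t) / (1 + t) = 2 * t / (1 + t)"
          using t by (simp add: field_simps)
        then show ?thesis
          using t by (simp add: ln_div ln_mult)
      qed
      have ln2: "ln (1 - - ((1 - t) / (1 + t))) = ln 2 - ln (1 + t)"
      proof -
        have "1 - - ((1 - t) / (1 + t)) = 2 / (1 + t)"
          using t by (simp add: field_simps)
        then show ?thesis
          using t by (simp add: ln_div)
      qed
      have ln3: "ln (1 - - t) = ln (1 + t)"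
        by simp
      show ?thesis
        unfolding g_def
        apply (rule derivative_eq_intros refl t numeral_neq_zero)+
        apply (simp only: ln1 ln2 ln3)
        using t apply (simp add: divide_simps)
        apply (simp add: algebra_simps power2_eq_square)
        done
    qed
  qed (use assms in auto)
  then show ?thesis
    by (simp add: g_def)
qed

lemma polylog3_Landen:
  fixes x :: real
  assumes "0 < x" "x \<le> 1/2"
  shows "polylog 3 x + polylog 3 (1 - x) + polylog 3 (x / (x - 1)) =
    zeta_val 3 + ln (1 - x) ^ 3 / 6 + zeta_val 2 * ln (1 - x) - ln x * ln (1 - x) ^ 2 / 2"
proof -
  define g where "g x = polylog 3 x + polylog 3 (1 - x) + polylog 3 (x / (x - 1))
    - (ln (1 - x) ^ 3 / 6 + zeta_val 2 * ln (1 - x) - ln x * ln (1 - x) ^ 2 / 2)" for x :: real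
  have "((\<lambda>x::real. ln (1 - x) ^ 3 / 6 + zeta_val 2 * ln (1 - x) - ln x * ln (1 - x) ^ 2 / 2)
      \<longlongrightarrow> 0) (at_right 0)"
    by real_asymp
  then have "(g \<longlongrightarrow> polylog 3 0 + polylog 3 (1 - 0) + polylog 3 (0 / (0 - 1)) - 0) (at_right 0)"
    unfolding g_def[abs_def]
    by (intro tendsto_diff tendsto_add tendsto_polylog_compose_at_right[where b = "1/2"]
        Landen_map_bounds)
      (auto intro!: continuous_intros)
  then have lim: "(g \<longlongrightarrow> zeta_val 3) (at_right 0)"
    by (simp add: zeta_val_def)
  have "g x = zeta_val 3"
  proof (rule DERIV_zero_imp_eq_limit_at_right[of 0 "1/2" g, OF _ _ _ lim])
    show "continuous_on {0<..1/2} g"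
      unfolding g_def
      by (intro continuous_intros continuous_on_polylog_compose Landen_map_bounds) auto
    show "(g has_real_derivative 0) (at t)" if "0 < t" "t < 1/2" for t
    proof -
      have t: "\<bar>t\<bar> < 1" "t \<noteq> 0" "\<bar>1 - t\<bar> < 1" "1 - t \<noteq> 0" "t - 1 \<noteq> 0" "0 < 1 - t" "0 < t"
        "\<bar>t / (t - 1)\<bar> < 1" "t / (t - 1) \<noteq> 0"
        using that Landen_map_strict_bound[of t] by auto
      have Li2_Landen: "polylog 2 (t / (t - 1)) = - polylog 2 t - ln (1 - t) ^ 2 / 2"
        using polylog2_Landen[of t] that by simp
      have Li2_reflection: "polylog 2 (1 - t) = zeta_val 2 - ln t * ln (1 - t) - polylog 2 t"
        using polylog2_reflection[of t] that by simp
      show ?thesis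
        unfolding g_def
        apply (rule derivative_eq_intros refl t numeral_neq_zero)+
        apply (simp only: Li2_Landen Li2_reflection)
        using t apply (simp add: divide_simps)
        apply (simp add: algebra_simps power2_eq_square power3_eq_cube)
        done
    qed
  qed (use assms in auto)
  then show ?thesis
    by (simp add: g_def)
qed

lemma polylog2_reciprocal_one_plus:
  fixes t :: real
  assumes "0 < t" "t \<le> 1"
  shows "polylog 2 (1 / (1 + t))
    = zeta_val 2 + (ln t - ln (1 + t)) * ln (1 + t) + polylog 2 (-t) + ln (1 + t) ^ 2 / 2"
proof -
  have "polylog 2 (t / (1 + t)) + polylog 2 (1 / (1 + t)) = zeta_val 2 - ln (t / (1 + t)) * ln (1 / (1 + t))"
    using polylog2_reflection[of "t / (1 + t)"] assms by (simp add: field_simps)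
  moreover have "(-t) / (-t - 1) = t / (1 + t)"
    using assms by (simp add: field_simps)
  then have "polylog 2 (-t) + polylog 2 (t / (1 + t)) = - (ln (1 + t) ^ 2) / 2"
    using polylog2_Landen[of "-t"] assms by simp
  moreover have "ln (t / (1 + t)) = ln t - ln (1 + t)" "ln (1 / (1 + t)) = - ln (1 + t)"
    using assms by (simp_all add: ln_div)
  ultimately show ?thesis
    by (simp add: algebra_simps)
qed

lemma polylog2_one_minus_square:
  fixes t :: real
  assumes "0 < t" "t < 1"
  shows "polylog 2 (1 - t\<^sup>2)
    = zeta_val 2 - 2 * ln t * (ln (1 - t) + ln (1 + t)) - 2 * polylog 2 t - 2 * polylog 2 (-t)"
proof -
  have "0 < t\<^sup>2" "t\<^sup>2 < 1"
    using assms by (auto simp: power_less_one_iff)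
  then have "polylog 2 (t\<^sup>2) + polylog 2 (1 - t\<^sup>2) = zeta_val 2 - ln (t\<^sup>2) * ln (1 - t\<^sup>2)"
    by (rule polylog2_reflection)
  moreover have "polylog 2 (t\<^sup>2) = 2 * (polylog 2 t + polylog 2 (-t))"
    using polylog_square[of 2 t] assms by simp
  moreover have "ln (t\<^sup>2) = 2 * ln t"
    using assms by (simp add: ln_realpow)
  moreover have "1 - t\<^sup>2 = (1 - t) * (1 + t)"
    by (simp add: algebra_simps power2_eq_square)
  then have "ln (1 - t\<^sup>2) = ln (1 - t) + ln (1 + t)"
    using assms by (simp add: ln_mult)
  ultimately show ?thesis
    by (simp add: algebra_simps)
qed

lemma polylog3_chi_relation:
  fixes y :: real
  assumes "0 \<le> y" "y \<le> 1/2"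
  shows "polylog 3 ((1 - y) / (1 + y)) - polylog 3 (- ((1 - y) / (1 + y))) - 2 * polylog 3 (1 - y)
    - 2 * polylog 3 (1 / (1 + y)) + polylog 3 (1 - y\<^sup>2) / 2 - zeta_val 2 * ln (1 + y) + ln (1 + y) ^ 3 / 3
    = - 7/4 * zeta_val 3"
proof -
  define g where "g y = polylog 3 ((1 - y) / (1 + y)) - polylog 3 (- ((1 - y) / (1 + y)))
    - 2 * polylog 3 (1 - y) - 2 * polylog 3 (1 / (1 + y)) + polylog 3 (1 - y\<^sup>2) / 2
    - zeta_val 2 * ln (1 + y) + ln (1 + y) ^ 3 / 3" for y :: real
  have "continuous_on {0..1/2} g"
  proof -
    have "(1 - x) / (1 + x) \<in> {-1..1}" "- ((1 - x) / (1 + x)) \<in> {-1..1}" "1 - x \<in> {-1..1}"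
      "1 / (1 + x) \<in> {-1..1}" "1 - x\<^sup>2 \<in> {-1..1}" if "x \<in> {0..1/2}" for x :: real
    proof -
      from that have "0 \<le> x" "x \<le> 1/2"
        by auto
      moreover from this have "x\<^sup>2 \<le> 1"
        by (simp add: power_le_one)
      ultimately show "(1 - x) / (1 + x) \<in> {-1..1}" "- ((1 - x) / (1 + x)) \<in> {-1..1}"
        "1 - x \<in> {-1..1}" "1 / (1 + x) \<in> {-1..1}" "1 - x\<^sup>2 \<in> {-1..1}"
        by (auto simp: divide_le_eq le_divide_eq)
    qed
    then show ?thesis
      unfolding g_def by (intro continuous_intros continuous_on_polylog_compose) auto
  qed
  moreover have "(g has_real_derivative 0) (at t)" if "0 < t" "t < 1/2" for t
  proof -
    have t_square: "0 < t\<^sup>2" "t\<^sup>2 < 1"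
      using that by (auto simp: power_less_one_iff)
    have t: "\<bar>(1 - t) / (1 + t)\<bar> < 1" "(1 - t) / (1 + t) \<noteq> 0" "\<bar>- ((1 - t) / (1 + t))\<bar> < 1"
      "- ((1 - t) / (1 + t)) \<noteq> 0" "\<bar>1 - t\<bar> < 1" "1 - t \<noteq> 0" "\<bar>1 / (1 + t)\<bar> < 1"
      "1 / (1 + t) \<noteq> 0" "1 + t \<noteq> 0" "0 < 1 + t" "\<bar>1 - t\<^sup>2\<bar> < 1" "1 - t\<^sup>2 \<noteq> 0"
      using that t_square by (auto simp: divide_less_eq less_divide_eq abs_less_iff)
    have chi: "polylog 2 ((1 - t) / (1 + t)) = polylog 2 (- ((1 - t) / (1 + t))) + 3/2 * zeta_val 2
        + ln t * (ln (1 + t) - ln (1 - t)) - polylog 2 t + polylog 2 (-t)"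
      using polylog2_chi_reflection[of t] that by simp
    have reflection: "polylog 2 (1 - t) = zeta_val 2 - ln t * ln (1 - t) - polylog 2 t"
      using polylog2_reflection[of t] that by simp
    have "t \<le> 1" "t < 1"
      using that by auto
    note reciprocal = polylog2_reciprocal_one_plus[OF that(1) this(1)]
      and square = polylog2_one_minus_square[OF that(1) this(2)]
    show ?thesis
      unfolding g_def
      apply (rule derivative_eq_intros refl t numeral_neq_zero)+
      apply (simp only: chi reflection reciprocal square)
      using t that apply (simp add: divide_simps)
      apply (simp add: algebra_simps power2_eq_square power3_eq_cube)
      done
  qed
  ultimately have "g y = g 0"
    using assms by (intro DERIV_zero_imp_const_interval[of 0 "1/2" g]) auto
  also have "g 0 = - 7/4 * zeta_val 3"
    by (simp add: g_def polylog_minus_one zeta_val_def)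
  finally show ?thesis
    by (simp add: g_def)
qed

lemma polylog3_one_third:
  "polylog 3 (- (1/3)) - 2 * polylog 3 (1/3) = - (ln 3 ^ 3) / 6 + zeta_val 2 * ln 3 - 13/6 * zeta_val 3"
proof -
  have ln4: "ln (4::real) = 2 * ln 2"
    using ln_mult[of 2 2] by simp
  have "ln (1/2::real) = - ln 2" "ln (2/3::real) = ln 2 - ln 3" "ln (1/3::real) = - ln 3"
    "ln (3/4::real) = ln 3 - 2 * ln 2" "ln (1/4::real) = - 2 * ln 2" "ln (3/2::real) = ln 3 - ln 2"
    by (simp_all add: ln_div ln4)
  moreover have "2 * polylog 3 (1/2) + polylog 3 (-1) =
      zeta_val 3 + ln (1/2) ^ 3 / 6 + zeta_val 2 * ln (1/2) - ln (1/2) * ln (1/2) ^ 2 / 2"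
    using polylog3_Landen[of "1/2"] by simp
  moreover have "polylog 3 (1/3) + polylog 3 (2/3) + polylog 3 (- (1/2)) =
      zeta_val 3 + ln (2/3) ^ 3 / 6 + zeta_val 2 * ln (2/3) - ln (1/3) * ln (2/3) ^ 2 / 2"
    using polylog3_Landen[of "1/3"] by simp
  moreover have "polylog 3 (1/4) + polylog 3 (3/4) + polylog 3 (- (1/3)) =
      zeta_val 3 + ln (3/4) ^ 3 / 6 + zeta_val 2 * ln (3/4) - ln (1/4) * ln (3/4) ^ 2 / 2"
    using polylog3_Landen[of "1/4"] by simp
  moreover have "polylog 3 (1/3) - polylog 3 (- (1/3)) - 2 * polylog 3 (1/2) - 2 * polylog 3 (2/3)
      + polylog 3 (3/4) / 2 - zeta_val 2 * ln (3/2) + ln (3/2) ^ 3 / 3 = - 7/4 * zeta_val 3"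
    using polylog3_chi_relation[of "1/2"] by (simp add: power2_eq_square)
  moreover have "polylog 3 (1/4) = 4 * (polylog 3 (1/2) + polylog 3 (- (1/2)))"
    using polylog_square[of 3 "1/2"] by (simp add: power2_eq_square)
  moreover have "polylog 3 (-1) = - 3/4 * zeta_val 3"
    by (simp add: polylog_minus_one)
  ultimately show ?thesis
    by algebra
qed

definition P2_closed_form :: "real \<Rightarrow> real" where
  "P2_closed_form u = ln u ^ 2 / 2 + polylog 2 (1 / u) - zeta_val 2 / 2"

definition P3_closed_form :: "real \<Rightarrow> real" where
  "P3_closed_form u = (1/2) * polylog 3 (1 / (u * (2 - u))) - polylog 3 (1 / u)
    - polylog 3 (1 / (2 - u)) + polylog 2 (1 / u) * ln (u - 2)
    + (1/3) * zeta_val 3 - (1/2) * zeta_val 2 * ln u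
    + (1/12) * (ln (u * (u - 2))) ^ 3 - (1/2) * (ln (u - 2)) ^ 2 * ln u"

lemma continuous_on_P2_closed_form: "continuous_on {2..b} P2_closed_form"
  unfolding P2_closed_form_def
  by (intro continuous_intros continuous_on_polylog_compose) (auto simp: divide_le_eq le_divide_eq)

lemma P2_closed_form_2: "P2_closed_form 2 = 0"
proof -
  have "polylog 2 (1/2) + polylog 2 (1 - 1/2) = zeta_val 2 - ln (1/2) * ln (1 - 1/2)"
    by (rule polylog2_reflection) auto
  then show ?thesis
    by (simp add: P2_closed_form_def ln_div power2_eq_square)
qed

lemma has_real_derivative_P2_closed_form:
  assumes "2 < t"
  shows "(P2_closed_form has_real_derivative ln (t - 1) / t) (at t)"
proof -
  have t: "\<bar>1 / t\<bar> < 1" "1 / t \<noteq> 0" "t \<noteq> 0" "0 < t"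
    using assms by auto
  have ln_eq: "ln (1 - 1 / t) = ln (t - 1) - ln t"
  proof -
    have "1 - 1 / t = (t - 1) / t"
      using t by (simp add: field_simps)
    then show ?thesis
      using assms by (simp add: ln_div)
  qed
  show ?thesis
    unfolding P2_closed_form_def
    apply (rule derivative_eq_intros refl t numeral_neq_zero)+
    apply (simp only: ln_eq)
    using t apply (simp add: divide_simps)
    done
qed

lemma polylog2_reciprocal:
  fixes w :: real
  assumes "w \<le> -1 \<or> 2 \<le> w"
  shows "polylog 2 (1 / w) = - polylog 2 (1 / (1 - w)) - ln (w / (w - 1)) ^ 2 / 2"
proof -
  have w: "w \<noteq> 0" "1 - w \<noteq> 0" "w - 1 \<noteq> 0"
    using assms by auto
  have "-1 \<le> 1 / (1 - w)" "1 / (1 - w) \<le> 1/2"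
    using assms by (auto simp: divide_le_eq le_divide_eq)
  from polylog2_Landen[OF this]
  have "polylog 2 (1 / (1 - w)) + polylog 2 (1 / (1 - w) / (1 / (1 - w) - 1))
      = - (ln (1 - 1 / (1 - w)) ^ 2) / 2" .
  moreover have "1 - 1 / (1 - w) = w / (w - 1)"
  proof -
    have "1 - 1 / (1 - w) = - w / (1 - w)"
      using w by (simp add: field_simps)
    also have "\<dots> = w / (w - 1)"
      using w by (simp add: divide_simps algebra_simps)
    finally show ?thesis .
  qed
  moreover have "1 / (1 - w) / (1 / (1 - w) - 1) = 1 / w"
  proof -
    have "1 / (1 - w) - 1 = w / (1 - w)"
      using w by (simp add: field_simps)
    then show ?thesis
      using w by simp
  qed
  ultimately show ?thesis
    by simp
qed

lemma polylog2_P3_arguments: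
  fixes t :: real
  assumes "3 < t"
  defines "y \<equiv> 1 / (t - 1)"
  shows "polylog 2 (1 / t) = - polylog 2 (-y) - (ln t - ln (t - 1)) ^ 2 / 2"
    and "polylog 2 (1 / (2 - t)) = - polylog 2 y - (ln (t - 2) - ln (t - 1)) ^ 2 / 2"
    and "polylog 2 (1 / (t * (2 - t)))
      = - 2 * polylog 2 y - 2 * polylog 2 (-y) - (ln t + ln (t - 2) - 2 * ln (t - 1)) ^ 2 / 2"
proof -
  have t: "0 < t - 2" "0 < t - 1" "0 < t"
    using assms by auto
  have "1 / (1 - t) = -y"
    using t by (simp add: y_def field_simps)
  then show "polylog 2 (1 / t) = - polylog 2 (-y) - (ln t - ln (t - 1)) ^ 2 / 2"
    using polylog2_reciprocal[of t] assms t by (simp add: ln_div)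
  have "1 / (1 - (2 - t)) = y"
    by (simp add: y_def)
  moreover have "(2 - t) / (2 - t - 1) = (t - 2) / (t - 1)"
    using t by (subst frac_eq_eq) (auto simp: algebra_simps)
  ultimately show "polylog 2 (1 / (2 - t)) = - polylog 2 y - (ln (t - 2) - ln (t - 1)) ^ 2 / 2"
    using polylog2_reciprocal[of "2 - t"] assms t by (simp add: ln_div)
  have "1 * 1 \<le> t * (t - 2)"
    using assms by (intro mult_mono) auto
  then have "t * (2 - t) \<le> -1"
    by (simp add: algebra_simps)
  moreover have "1 - t * (2 - t) = (t - 1)\<^sup>2"
    by (simp add: algebra_simps power2_eq_square)
  then have "1 / (1 - t * (2 - t)) = y\<^sup>2"
    by (simp add: y_def power_one_over)
  moreover have "t * (2 - t) / (t * (2 - t) - 1) = t * (t - 2) / (t - 1)\<^sup>2"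
    using t \<open>1 - t * (2 - t) = (t - 1)\<^sup>2\<close> by (simp add: divide_simps algebra_simps)
  moreover have "ln (t * (t - 2) / (t - 1) ^ 2) = ln t + ln (t - 2) - 2 * ln (t - 1)"
    using t by (simp add: ln_div ln_mult ln_realpow)
  moreover have "polylog 2 (y\<^sup>2) = 2 * (polylog 2 y + polylog 2 (-y))"
    using polylog_square[of 2 y] t by (simp add: y_def divide_less_eq)
  ultimately show "polylog 2 (1 / (t * (2 - t)))
      = - 2 * polylog 2 y - 2 * polylog 2 (-y) - (ln t + ln (t - 2) - 2 * ln (t - 1)) ^ 2 / 2"
    using polylog2_reciprocal[of "t * (2 - t)"] by simp
qed

lemma has_real_derivative_P3_closed_form:
  assumes "3 < t"
  shows "(P3_closed_form has_real_derivative P2_closed_form (t - 1) / t) (at t)"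
proof -
  define y where "y = 1 / (t - 1)"
  have t: "t \<noteq> 0" "t - 1 \<noteq> 0" "t - 2 \<noteq> 0" "2 - t \<noteq> 0" "t * (2 - t) \<noteq> 0" "0 < t" "0 < t - 2"
    "0 < t * (t - 2)" "0 < t - 1"
    using assms by auto
  have args: "\<bar>1 / (t * (2 - t))\<bar> < 1" "1 / (t * (2 - t)) \<noteq> 0" "\<bar>1 / t\<bar> < 1" "1 / t \<noteq> 0"
    "\<bar>1 / (2 - t)\<bar> < 1" "1 / (2 - t) \<noteq> 0"
  proof -
    have "1 < t * (t - 2)"
      by (rule less_1_mult) (use assms in auto)
    moreover have "\<bar>1 / (t * (2 - t))\<bar> = 1 / (t * (t - 2))"
      using t by (simp add: abs_divide abs_mult)
    ultimately show "\<bar>1 / (t * (2 - t))\<bar> < 1"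
      by simp
    show "\<bar>1 / (2 - t)\<bar> < 1"
      using assms by (simp add: abs_divide divide_less_eq)
  qed (use assms in auto)
  have ln_product: "ln (t * (t - 2)) = ln t + ln (t - 2)"
    using t by (simp add: ln_mult)
  have ln_quotient: "ln (1 - 1 / t) = ln (t - 1) - ln t"
  proof -
    have "1 - 1 / t = (t - 1) / t"
      using t by (simp add: field_simps)
    then show ?thesis
      using t by (simp add: ln_div)
  qed
  have y: "polylog 2 (1 / (t - 1)) = polylog 2 y"
    by (simp add: y_def)
  note dilogs = polylog2_P3_arguments[OF assms, folded y_def]
  show ?thesis
    unfolding P3_closed_form_def P2_closed_form_def
    apply (rule derivative_eq_intros refl args t numeral_neq_zero)+
    apply (simp only: dilogs y ln_product ln_quotient)
    using t apply (simp add: divide_simps)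
    apply (simp add: algebra_simps power2_eq_square power3_eq_cube)
    done
qed

lemma continuous_on_P3_closed_form: "continuous_on {3..b} P3_closed_form"
proof -
  have "1 / (x * (2 - x)) \<in> {-1..1}" "1 / x \<in> {-1..1}" "1 / (2 - x) \<in> {-1..1}"
    "x * (2 - x) \<noteq> 0" "x \<noteq> 0" "2 - x \<noteq> 0" "0 < x" "0 < x - 2" "0 < x * (x - 2)"
    if "x \<in> {3..b}" for x :: real
  proof -
    have x: "3 \<le> x"
      using that by auto
    have "1 * 1 \<le> x * (x - 2)"
      by (rule mult_mono) (use x in auto)
    moreover have "\<bar>1 / (x * (2 - x))\<bar> = 1 / (x * (x - 2))"
      using x by (simp add: abs_divide abs_mult)
    ultimately have "\<bar>1 / (x * (2 - x))\<bar> \<le> 1"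
      by simp
    then show "1 / (x * (2 - x)) \<in> {-1..1}"
      unfolding atLeastAtMost_iff abs_le_iff by linarith
    show "1 / x \<in> {-1..1}" "1 / (2 - x) \<in> {-1..1}" "x * (2 - x) \<noteq> 0" "x \<noteq> 0" "2 - x \<noteq> 0"
      "0 < x" "0 < x - 2" "0 < x * (x - 2)"
      using x by (auto simp: divide_le_eq le_divide_eq)
  qed
  then show ?thesis
    unfolding P3_closed_form_def
    by (intro continuous_intros continuous_on_polylog_compose) auto
qed

lemma P3_closed_form_3: "P3_closed_form 3 = 0"
proof -
  have "P3_closed_form 3 = (1/2) * polylog 3 (- (1/3)) - polylog 3 (1/3) - polylog 3 (-1)
      + (1/3) * zeta_val 3 - (1/2) * zeta_val 2 * ln 3 + (1/12) * (ln 3) ^ 3"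
    by (simp add: P3_closed_form_def)
  also have "\<dots> = 0"
    using polylog3_one_third polylog_minus_one[of 3] by simp
  finally show ?thesis .
qed

locale P_recursion =
  fixes P :: "nat \<Rightarrow> real \<Rightarrow> real"
  assumes P_0: "\<And>x. x \<ge> 0 \<Longrightarrow> P 0 x = 1"
    and P_at_index: "\<And>k. k \<ge> 1 \<Longrightarrow> P k (real k) = 0"
    and P_deriv: "\<And>k x. k \<ge> 1 \<Longrightarrow> x \<ge> real k \<Longrightarrow>
      (P k has_real_derivative P (k - 1) (x - 1) / x) (at x within {real k..})"
begin

lemma has_real_derivative_P:
  assumes "k \<ge> 1" "real k < x"
  shows "(P k has_real_derivative P (k - 1) (x - 1) / x) (at x)"
proof -
  have "(P k has_real_derivative P (k - 1) (x - 1) / x) (at x within {real k..})"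
    using assms by (intro P_deriv) auto
  then show ?thesis
    by (subst (asm) at_within_interior) (use assms(2) in auto)
qed

lemma continuous_on_P:
  assumes "k \<ge> 1"
  shows "continuous_on {real k..b} (P k)"
proof -
  have "continuous (at x within {real k..b}) (P k)" if "x \<in> {real k..b}" for x
    using that by (intro continuous_within_subset[OF DERIV_continuous[OF P_deriv[OF assms]]]) auto
  then show ?thesis
    by (simp add: continuous_on_eq_continuous_within)
qed

lemma P_eqI:
  assumes "k \<ge> 1" "real k \<le> x" "continuous_on {real k..x} Q" "Q (real k) = 0"
    and "\<And>t. real k < t \<Longrightarrow> t < x \<Longrightarrow> (Q has_real_derivative P (k - 1) (t - 1) / t) (at t)"
  shows "P k x = Q x"
proof -
  define h where "h = (\<lambda>y. P k y - Q y)"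
  have "h x = h (real k)"
  proof (rule DERIV_zero_imp_const_interval[of "real k" x h])
    show "continuous_on {real k..x} h"
      unfolding h_def by (intro continuous_intros continuous_on_P assms(1,3))
    show "(h has_real_derivative 0) (at t)" if "real k < t" "t < x" for t
      using DERIV_diff[OF has_real_derivative_P[OF assms(1) that(1)] assms(5)[OF that]]
      by (simp add: h_def)
  qed (use assms(2) in auto)
  then show ?thesis
    using P_at_index[OF assms(1)] assms(4) by (simp add: h_def)
qed

lemma P_1:
  assumes "x \<ge> 1"
  shows "P 1 x = ln x"
proof (rule P_eqI)
  show "continuous_on {real 1..x} ln"
    by (intro continuous_intros) auto
  show "(ln has_real_derivative P (1 - 1) (t - 1) / t) (at t)" if "real 1 < t" "t < x" for t
    using DERIV_ln_divide[of t] that by (simp add: P_0)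
qed (use assms in auto)

lemma P_2:
  assumes "x \<ge> 2"
  shows "P 2 x = P2_closed_form x"
proof (rule P_eqI)
  show "(P2_closed_form has_real_derivative P (2 - 1) (t - 1) / t) (at t)" if "real 2 < t" "t < x" for t
    using has_real_derivative_P2_closed_form[of t] P_1[of "t - 1"] that by simp
qed (use assms in \<open>auto simp: continuous_on_P2_closed_form P2_closed_form_2\<close>)

lemma P_3:
  assumes "x \<ge> 3"
  shows "P 3 x = P3_closed_form x"
proof (rule P_eqI)
  show "(P3_closed_form has_real_derivative P (3 - 1) (t - 1) / t) (at t)" if "real 3 < t" "t < x" for t
    using has_real_derivative_P3_closed_form[of t] P_2[of "t - 1"] that by simp
qed (use assms in \<open>auto simp: continuous_on_P3_closed_form P3_closed_form_3\<close>)

end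

theorem theorem4:
  fixes P :: "nat \<Rightarrow> real \<Rightarrow> real" and u :: real
  assumes P0: "\<And>x. x \<ge> 0 \<Longrightarrow> P 0 x = 1"
    and Pinit: "\<And>k. k \<ge> 1 \<Longrightarrow> P k (real k) = 0"
    and Pderiv: "\<And>k x. k \<ge> 1 \<Longrightarrow> x \<ge> real k \<Longrightarrow>
        ((P k) has_real_derivative (P (k - 1) (x - 1) / x)) (at x within {real k..})"
    and u: "u \<ge> 3"
  shows "P 3 u = (1/2) * polylog 3 (1 / (u * (2 - u))) - polylog 3 (1 / u)
      - polylog 3 (1 / (2 - u)) + polylog 2 (1 / u) * ln (u - 2)
      + (1/3) * zeta_val 3 - (1/2) * zeta_val 2 * ln u
      + (1/12) * (ln (u * (u - 2))) ^ 3 - (1/2) * (ln (u - 2)) ^ 2 * ln u"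
proof -
  interpret P_recursion P
    using P0 Pinit Pderiv by unfold_locales
  show ?thesis
    using P_3[OF u] by (simp add: P3_closed_form_def)
qed

end
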